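(* Let $Z$ be admissible with respect to $Z^\star$ and let $(\alpha_m)$ be a sequence witnessing property (4b) of admissibility. Suppose that $\hat X$ is a block-independent process with blocklength $b$. Then \[ \left|I(\hat X;Z^\star(\hat X))-\frac{I(\hat X_1^b;Z^\star(\hat X_1^b))}{b}\right|\le\alpha_b/b, \] where $\lim_{b\to\infty}\alpha_b/b=0$.
   Context: A process $X=(X_i)_{i\in\mathbb N}$ (with $X_m^n=(X_m,\dots,X_n)$) is block-independent with blocklength $b$ if for every $t\ge1$ and $n=tb$, $\Pr[X_1^n=x_1^n]=\prod_{i=1}^t\Pr[X_1^b=x_{(i-1)b+1}^{ib}]$. A channel $Z$ with finite input alphabet assigns to each finite input string $x$ a random output $Z(x)$ in a discrete set; applying a channel to several inputs means independent applications. $A\to B\to C$ denotes a Markov chain; logs base 2. For a process $P$, $I(P;Z(P))=\liminf_n I(P_1^n;Z(P_1^n))/n$. $Z$ is admissible with respect to $Z^\star$ (same input alphabet) if: (1) there is $c>0$ with $H(Z^\star(X_1^n))\le cn$ for every process $X$ and $n\ge1$; (2) $I(X;Z(X))=I(X;Z^\star(X))$ for every process $X$; (3) for every $X$ and $1\le m\le n$: $X_1^n\to Z^\star(X_1^m),Z^\star(X_{m+1}^n)\to Z^\star(X_1^n)$; (4a) for every integer $\tau\ge1$ there is a non-decreasing $\gamma_m=o(m)$ with $\sum_m\gamma_m/m^2<\infty$ such that for every $X$ and $n\ge\tau$ there are $W_{\mathrm{pre}},W_{\mathrm{suf}}$ with $X_1^n\to Z^\star(X_1^n),W_{\mathrm{pre}}\to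 Z^\star(X_1^\tau),Z^\star(X_{\tau+1}^n)$, $X_1^n\to Z^\star(X_1^n),W_{\mathrm{suf}}\to Z^\star(X_1^{n-\tau}),Z^\star(X_{n-\tau+1}^n)$, $H(W_{\mathrm{pre}}),H(W_{\mathrm{suf}})\le\gamma_n$; (4b) there is a sequence $\alpha_m=o(m)$ such that for every $X$, $b$, $t$ there is $W$ with $X_1^{tb}\to Z^\star(X_1^{tb}),W\to Z^\star(X_1^b),\dots,Z^\star(X_{(t-1)b+1}^{tb})$ and $H(W)\le t\alpha_b$; (5) there is $\beta_m=o(m)$ such that for every $X$, $b$, $t$ there are $Y$ with $X_1^{tb}\to Z^\star(X_1^b),\dots,Z^\star(X_{(t-1)b+1}^{tb})\to Y$ and a deterministic $\phi$ with $Z^\star(X_1^{tb})=\phi(Z^\star(X_1^b),\dots,Z^\star(X_{(t-1)b+1}^{tb}),Y)$ and $\max_z\log|\phi^{-1}(z)|\le t\beta_b$. *)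

theory Defs
  imports "HOL-Probability.Probability"
begin

text \<open>Shannon entropy of a discrete distribution; may be infinite, hence extended real.\<close>
definition entropy_pmf :: "'x pmf \<Rightarrow> ereal" where
  "entropy_pmf p = enn2ereal (\<integral>\<^sup>+ x. ennreal (- pmf p x * log 2 (pmf p x)) \<partial>count_space UNIV)"

definition mutual_info_pmf :: "('x \<times> 'y) pmf \<Rightarrow> real" where
  "mutual_info_pmf J = infsum (\<lambda>(x, y). pmf J (x, y) *
      log 2 (pmf J (x, y) / (pmf (map_pmf fst J) x * pmf (map_pmf snd J) y))) UNIV"

definition markov_chain :: "('x \<times> 'y \<times> 'z) pmf \<Rightarrow> bool" where
  "markov_chain J \<longleftrightarrow> (\<forall>a b c.
     pmf J (a, b, c) * pmf (map_pmf (\<lambda>(a, b, c). b) J) b =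
     pmf (map_pmf (\<lambda>(a, b, c). (a, b)) J) (a, b) * pmf (map_pmf (\<lambda>(a, b, c). (b, c)) J) (b, c))"

definition chan_joint :: "'x pmf \<Rightarrow> ('x \<Rightarrow> 'o pmf) \<Rightarrow> ('x \<times> 'o) pmf" where
  "chan_joint p Z = bind_pmf p (\<lambda>x. map_pmf (Pair x) (Z x))"

definition chan_MI :: "'x pmf \<Rightarrow> ('x \<Rightarrow> 'o pmf) \<Rightarrow> real" where
  "chan_MI p Z = mutual_info_pmf (chan_joint p Z)"

fun indep_apply :: "('x \<Rightarrow> 'o pmf) \<Rightarrow> 'x list \<Rightarrow> 'o list pmf" where
  "indep_apply Z [] = return_pmf []"
| "indep_apply Z (x # xs) = bind_pmf (Z x) (\<lambda>z. map_pmf (Cons z) (indep_apply Z xs))"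

text \<open>A process over alphabet 'a is given by the laws P n of its prefixes X_1^n,
  which must be consistent.\<close>
definition process :: "(nat \<Rightarrow> 'a list pmf) \<Rightarrow> bool" where
  "process P \<longleftrightarrow> (\<forall>n. \<forall>x\<in>set_pmf (P n). length x = n) \<and>
                   (\<forall>m n. m \<le> n \<longrightarrow> map_pmf (take m) (P n) = P m)"

definition proc_MI :: "(nat \<Rightarrow> 'a list pmf) \<Rightarrow> ('a list \<Rightarrow> 'o pmf) \<Rightarrow> real" where
  "proc_MI P Z = real_of_ereal (liminf (\<lambda>n. ereal (chan_MI (P n) Z / real n)))"

definition blocks :: "nat \<Rightarrow> nat \<Rightarrow> 'a list \<Rightarrow> 'a list list" where
  "blocks b t x = map (\<lambda>i. take b (drop (i * b) x)) [0..<t]"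

definition block_independent :: "(nat \<Rightarrow> 'a list pmf) \<Rightarrow> nat \<Rightarrow> bool" where
  "block_independent P b \<longleftrightarrow> (\<forall>t\<ge>1. \<forall>x. length x = t * b \<longrightarrow>
      pmf (P (t * b)) x = prod_list (map (pmf (P b)) (blocks b t x)))"

definition pieces_joint :: "'x pmf \<Rightarrow> ('x \<Rightarrow> 'o pmf) \<Rightarrow> ('x \<Rightarrow> 'x list) \<Rightarrow> ('x \<times> 'o list) pmf" where
  "pieces_joint p Z f = chan_joint p (\<lambda>x. indep_apply Z (f x))"

text \<open>An auxiliary variable W (discrete, encoded in nat) on a coupling of (X, Z(X), Z(pieces of X))
  such that X \<rightarrow> (Z(X), W) \<rightarrow> Z(pieces) with H(W) \<le> bound.\<close>
definition aux_recovers ::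
  "'x pmf \<Rightarrow> ('x \<Rightarrow> 'o pmf) \<Rightarrow> ('x \<Rightarrow> 'x list) \<Rightarrow> real \<Rightarrow> bool" where
  "aux_recovers p Z f c \<longleftrightarrow> (\<exists>K :: ('x \<times> 'o \<times> 'o list \<times> nat) pmf.
      map_pmf (\<lambda>(x, z, zs, w). (x, z)) K = chan_joint p Z \<and>
      map_pmf (\<lambda>(x, z, zs, w). (x, zs)) K = pieces_joint p Z f \<and>
      markov_chain (map_pmf (\<lambda>(x, z, zs, w). (x, (z, w), zs)) K) \<and>
      entropy_pmf (map_pmf (\<lambda>(x, z, zs, w). w) K) \<le> ereal c)"

definition adm1 :: "('a list \<Rightarrow> 'p pmf) \<Rightarrow> bool" where
  "adm1 Zs \<longleftrightarrow> (\<exists>c>0. \<forall>P :: nat \<Rightarrow> 'a list pmf. process P \<longrightarrow>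
      (\<forall>n\<ge>1. entropy_pmf (bind_pmf (P n) Zs) \<le> ereal (c * real n)))"

definition adm2 :: "('a list \<Rightarrow> 'o pmf) \<Rightarrow> ('a list \<Rightarrow> 'p pmf) \<Rightarrow> bool" where
  "adm2 Z Zs \<longleftrightarrow> (\<forall>P :: nat \<Rightarrow> 'a list pmf. process P \<longrightarrow> proc_MI P Z = proc_MI P Zs)"

definition adm3 :: "('a list \<Rightarrow> 'p pmf) \<Rightarrow> bool" where
  "adm3 Zs \<longleftrightarrow> (\<forall>P :: nat \<Rightarrow> 'a list pmf. \<forall>m n. process P \<and> 1 \<le> m \<and> m \<le> n \<longrightarrow>
     (\<exists>K :: ('a list \<times> 'p list \<times> 'p) pmf.
        map_pmf (\<lambda>(x, zs, z). (x, zs)) K = pieces_joint (P n) Zs (\<lambda>x. [take m x, drop m x]) \<and>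
        map_pmf (\<lambda>(x, zs, z). (x, z)) K = chan_joint (P n) Zs \<and>
        markov_chain K))"

definition adm4a :: "('a list \<Rightarrow> 'p pmf) \<Rightarrow> bool" where
  "adm4a Zs \<longleftrightarrow> (\<forall>\<tau>::nat. \<tau> \<ge> 1 \<longrightarrow> (\<exists>\<gamma> :: nat \<Rightarrow> real.
     mono \<gamma> \<and> (\<lambda>m. \<gamma> m / real m) \<longlonglongrightarrow> 0 \<and> summable (\<lambda>m. \<gamma> m / (real m)^2) \<and>
     (\<forall>P :: nat \<Rightarrow> 'a list pmf. \<forall>n. process P \<and> n \<ge> \<tau> \<longrightarrow>
        aux_recovers (P n) Zs (\<lambda>x. [take \<tau> x, drop \<tau> x]) (\<gamma> n) \<and>
        aux_recovers (P n) Zs (\<lambda>x. [take (n - \<tau>) x, drop (n - \<tau>) x]) (\<gamma> n))))"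

definition adm4b :: "('a list \<Rightarrow> 'p pmf) \<Rightarrow> (nat \<Rightarrow> real) \<Rightarrow> bool" where
  "adm4b Zs \<alpha> \<longleftrightarrow> (\<lambda>m. \<alpha> m / real m) \<longlonglongrightarrow> 0 \<and>
     (\<forall>P :: nat \<Rightarrow> 'a list pmf. \<forall>b t. process P \<and> b \<ge> 1 \<and> t \<ge> 1 \<longrightarrow>
        aux_recovers (P (t * b)) Zs (blocks b t) (real t * \<alpha> b))"

definition adm5 :: "('a list \<Rightarrow> 'p pmf) \<Rightarrow> bool" where
  "adm5 Zs \<longleftrightarrow> (\<exists>\<beta> :: nat \<Rightarrow> real. (\<lambda>m. \<beta> m / real m) \<longlonglongrightarrow> 0 \<and>
     (\<forall>P :: nat \<Rightarrow> 'a list pmf. \<forall>b t. process P \<and> b \<ge> 1 \<and> t \<ge> 1 \<longrightarrow>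
       (\<exists>(K :: ('a list \<times> 'p list \<times> nat) pmf) (\<phi> :: 'p list \<Rightarrow> nat \<Rightarrow> 'p).
          map_pmf (\<lambda>(x, zs, y). (x, zs)) K = pieces_joint (P (t * b)) Zs (blocks b t) \<and>
          markov_chain K \<and>
          map_pmf (\<lambda>(x, zs, y). (x, \<phi> zs y)) K = chan_joint (P (t * b)) Zs \<and>
          (\<forall>zs y. (zs, y) \<in> set_pmf (map_pmf snd K) \<longrightarrow>
             (let S = {(zs', y'). (zs', y') \<in> set_pmf (map_pmf snd K) \<and> \<phi> zs' y' = \<phi> zs y}
              in finite S \<and> log 2 (real (card S)) \<le> real t * \<beta> b)))))"

definition admissible :: "('a list \<Rightarrow> 'o pmf) \<Rightarrow> ('a list \<Rightarrow> 'p pmf) \<Rightarrow> bool" where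
  "admissible Z Zs \<longleftrightarrow> adm1 Zs \<and> adm2 Z Zs \<and> adm3 Zs \<and> adm4a Zs \<and>
     (\<exists>\<alpha>. adm4b Zs \<alpha>) \<and> adm5 Zs"

end

theory Submission
  imports Defs
begin

text \<open>Write \<open>I(n) = I(X\<^sub>1\<^sup>n; Z\<^sup>\<star>(X\<^sub>1\<^sup>n))\<close>. By block independence, the outputs of
  \<open>Z\<^sup>\<star>\<close> on the \<open>t\<close> blocks of \<open>X\<^sub>1\<^sup>t\<^sup>b\<close> are independent pairs, so they carry exactly \<open>t I(b)\<close>
  bits about the input. Property (5) rebuilds the whole output from the block outputs and an
  auxiliary variable that is conditionally independent of the input, so by data processing
  \<open>I(tb) \<le> t I(b)\<close>; property (4b) recovers the block outputs from the whole output and a variable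
  of entropy at most \<open>t \<alpha>\<^sub>b\<close>, so \<open>t I(b) \<le> I(tb) + t \<alpha>\<^sub>b\<close>. Property (4a) shows that cutting off
  fewer than \<open>b\<close> trailing symbols costs only \<open>o(n)\<close>, so \<open>liminf I(n)/n\<close> is squeezed between
  \<open>(I(b) - \<alpha>\<^sub>b)/b\<close> and \<open>I(b)/b\<close>.\<close>

section \<open>Information densities\<close>

definition rv_pmf :: "'k pmf \<Rightarrow> ('k \<Rightarrow> 'v) \<Rightarrow> 'v \<Rightarrow> real" where
  "rv_pmf K V v = pmf (map_pmf V K) v"

lemma rv_pmf_eq_prob: "rv_pmf K V v = measure_pmf.prob K {k. V k = v}"
  by (simp add: rv_pmf_def pmf_map vimage_def)

lemma rv_pmf_pos: "k \<in> set_pmf K \<Longrightarrow> v = V k \<Longrightarrow> 0 < rv_pmf K V v"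
  by (simp add: rv_pmf_def pmf_positive)

lemma rv_pmf_mono:
  assumes "\<And>k'. V k' = V k \<Longrightarrow> U k' = U k"
  shows "rv_pmf K V (V k) \<le> rv_pmf K U (U k)"
  unfolding rv_pmf_eq_prob by (rule measure_pmf.finite_measure_mono) (use assms in blast, simp)

lemma rv_pmf_cong:
  assumes "\<And>k'. V k' = v \<longleftrightarrow> U k' = u"
  shows "rv_pmf K V v = rv_pmf K U u"
  unfolding rv_pmf_eq_prob using assms by presburger

lemma pmf_le_pmf_map: "pmf J z \<le> pmf (map_pmf f J) (f z)"
proof -
  have "pmf J z = measure_pmf.prob J {z}" by (simp add: measure_pmf_single)
  also have "\<dots> \<le> measure_pmf.prob J (f -` {f z})"
    by (rule measure_pmf.finite_measure_mono) auto
  finally show ?thesis by (simp add: pmf_map)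
qed

lemma infsum_pmf_eq_expectation:
  fixes F :: "'a \<Rightarrow> real"
  assumes "integrable (measure_pmf J) F"
  shows "infsum (\<lambda>z. pmf J z * F z) UNIV = measure_pmf.expectation J F"
proof -
  have i: "integrable (count_space UNIV) (\<lambda>z. pmf J z * F z)"
    using assms unfolding measure_pmf_eq_density
    by (subst (asm) integrable_density) auto
  have "measure_pmf.expectation J F = (\<integral>z. pmf J z * F z \<partial>count_space UNIV)"
    unfolding measure_pmf_eq_density by (subst integral_density) auto
  also have "\<dots> = infsetsum (\<lambda>z. pmf J z * F z) UNIV" by (simp add: infsetsum_def)
  also have "\<dots> = infsum (\<lambda>z. pmf J z * F z) UNIV"
    by (rule infsetsum_infsum) (simp add: abs_summable_on_def i)
  finally show ?thesis by simp
qed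

lemma neg_mult_log_le: assumes "0 < u" "u \<le> 1" shows "- u * log 2 u \<le> 1 / ln 2"
proof -
  have "ln (1/u) \<le> 1/u - 1" using assms by (intro ln_le_minus_one) auto
  hence "- ln u \<le> 1/u - 1" using assms by (simp add: ln_div)
  hence "u * (- ln u) \<le> u * (1/u - 1)" using assms by (intro mult_left_mono) auto
  also have "\<dots> \<le> 1" using assms by (simp add: field_simps)
  finally have "- (u * ln u) \<le> 1" by simp
  hence "- (u * ln u) / ln 2 \<le> 1 / ln 2" by (rule divide_right_mono) simp
  thus ?thesis by (simp add: log_def)
qed

text \<open>The conditional self-information \<open>- log p(x | y)\<close> has expectation at most
  \<open>|supp X| / ln 2\<close>, because \<open>- u log u \<le> 1 / ln 2\<close>.\<close>
lemma integrable_cond_self_information: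
  fixes J :: "('x \<times> 'y) pmf"
  assumes fin: "finite (set_pmf (map_pmf fst J))"
  shows "integrable J (\<lambda>z. - log 2 (pmf J z / pmf (map_pmf snd J) (snd z)))"
proof -
  define S where "S = set_pmf (map_pmf fst J)"
  define pY where "pY = pmf (map_pmf snd J)"
  define G where "G z = - log 2 (pmf J z / pY (snd z))" for z
  define U where "U = pair_pmf (pmf_of_set S) (map_pmf snd J)"
  have S: "finite S" "S \<noteq> {}" using fin by (simp_all add: S_def set_pmf_not_empty)
  have pos: "0 < pmf J z" "pmf J z \<le> pY (snd z)" "fst z \<in> S" if "z \<in> set_pmf J" for z
    using that pmf_le_pmf_map[of J z snd] by (auto simp: pY_def S_def pmf_positive)
  have G_nn: "0 \<le> G z" if "z \<in> set_pmf J" for z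
    using pos[OF that] by (simp add: G_def)
  have JG: "ennreal (pmf J z) * ennreal (G z) \<le> ennreal (1 / ln 2 * card S) * ennreal (pmf U z)" for z
  proof (cases "z \<in> set_pmf J")
    case True
    note p = pos[OF True]
    have "pmf J z * G z = pY (snd z) * (- (pmf J z / pY (snd z)) * log 2 (pmf J z / pY (snd z)))"
      using p by (simp add: G_def)
    also have "\<dots> \<le> pY (snd z) * (1 / ln 2)"
      using p by (intro mult_left_mono neg_mult_log_le) auto
    also have "\<dots> = (1 / ln 2 * card S) * pmf U z"
      using p S by (cases z) (simp add: U_def pmf_pair pY_def)
    finally show ?thesis using G_nn[OF True]
      by (simp add: ennreal_mult'' [symmetric] flip: ennreal_mult)
  next
    case False thus ?thesis by (simp add: set_pmf_iff)
  qed
  have "(\<integral>\<^sup>+z. ennreal (G z) \<partial>J) = (\<integral>\<^sup>+z. ennreal (pmf J z) * ennreal (G z) \<partial>count_space UNIV)"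
    by (rule nn_integral_measure_pmf)
  also have "\<dots> \<le> (\<integral>\<^sup>+z. ennreal (1 / ln 2 * card S) * ennreal (pmf U z) \<partial>count_space UNIV)"
    by (intro nn_integral_mono JG)
  also have "\<dots> = ennreal (1 / ln 2 * card S)"
    by (simp add: nn_integral_cmult nn_integral_pmf_eq_1)
  also have "\<dots> < \<infinity>" by simp
  finally have "(\<integral>\<^sup>+z. ennreal (G z) \<partial>J) < \<infinity>" .
  then have "integrable J G"
    by (intro integrableI_nonneg) (auto simp: AE_measure_pmf_iff G_nn)
  then show ?thesis unfolding G_def[abs_def] pY_def .
qed

definition info_density :: "('x \<times> 'y) pmf \<Rightarrow> 'x \<times> 'y \<Rightarrow> real" where
  "info_density J z = log 2 (pmf J z / (pmf (map_pmf fst J) (fst z) * pmf (map_pmf snd J) (snd z)))"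

text \<open>On the support, \<open>|i(x, y)| \<le> - log p(x | y) + \<Sum>\<^sub>x' - log p(x')\<close>.\<close>
lemma integrable_info_density:
  fixes J :: "('x \<times> 'y) pmf"
  assumes fin: "finite (set_pmf (map_pmf fst J))"
  shows "integrable J (info_density J)"
proof -
  define S where "S = set_pmf (map_pmf fst J)"
  define pX where "pX = pmf (map_pmf fst J)"
  define pY where "pY = pmf (map_pmf snd J)"
  define G where "G z = - log 2 (pmf J z / pY (snd z))" for z
  define M where "M = (\<Sum>x\<in>S. - log 2 (pX x))"
  have pos: "0 < pmf J z" "0 < pX (fst z)" "fst z \<in> S" "pmf J z \<le> pY (snd z)"
    if "z \<in> set_pmf J" for z
    using that pmf_le_pmf_map[of J z snd]
    by (auto simp: pX_def pY_def S_def pmf_positive)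
  have M_ge: "- log 2 (pX x) \<le> M" if "x \<in> S" for x
    unfolding M_def using that fin
    by (intro member_le_sum) (auto simp: S_def pX_def pmf_le_1 pmf_positive)
  have bound: "norm (info_density J z) \<le> norm (G z + M)" if "z \<in> set_pmf J" for z
  proof -
    note p = pos[OF that]
    have "info_density J z = log 2 (pmf J z / pY (snd z)) - log 2 (pX (fst z))"
      using p by (simp add: info_density_def pX_def pY_def log_divide log_mult)
    moreover have "log 2 (pmf J z / pY (snd z)) \<le> 0" using p by simp
    moreover have "0 \<le> - log 2 (pX (fst z))" using p by (simp add: pX_def pmf_le_1)
    ultimately show ?thesis using M_ge[OF p(3)] by (simp add: G_def)
  qed
  have "integrable J (\<lambda>z. G z + M)"
    using integrable_cond_self_information[OF fin] by (simp add: G_def pY_def)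
  then show ?thesis
    by (rule Bochner_Integration.integrable_bound) (use bound in \<open>auto simp: AE_measure_pmf_iff\<close>)
qed

lemma mutual_info_pmf_eq_expectation:
  fixes J :: "('x \<times> 'y) pmf"
  assumes "finite (set_pmf (map_pmf fst J))"
  shows "mutual_info_pmf J = measure_pmf.expectation J (info_density J)"
proof -
  have "mutual_info_pmf J = infsum (\<lambda>z. pmf J z * info_density J z) UNIV"
    unfolding mutual_info_pmf_def info_density_def
    by (intro arg_cong2[where f=infsum] ext) (auto simp: case_prod_beta)
  also have "\<dots> = measure_pmf.expectation J (info_density J)"
    by (rule infsum_pmf_eq_expectation[OF integrable_info_density[OF assms]])
  finally show ?thesis .
qed

definition mutual_info_rv :: "'k pmf \<Rightarrow> ('k \<Rightarrow> 'a) \<Rightarrow> ('k \<Rightarrow> 'b) \<Rightarrow> real" where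
  "mutual_info_rv K A B = mutual_info_pmf (map_pmf (\<lambda>k. (A k, B k)) K)"

definition info_density_rv :: "'k pmf \<Rightarrow> ('k \<Rightarrow> 'a) \<Rightarrow> ('k \<Rightarrow> 'b) \<Rightarrow> 'k \<Rightarrow> real" where
  "info_density_rv K A B k =
     log 2 (rv_pmf K (\<lambda>k. (A k, B k)) (A k, B k) / (rv_pmf K A (A k) * rv_pmf K B (B k)))"

lemma info_density_rv_eq:
  "info_density_rv K A B = (\<lambda>k. info_density (map_pmf (\<lambda>k. (A k, B k)) K) (A k, B k))"
  by (simp add: fun_eq_iff info_density_def info_density_rv_def rv_pmf_def map_pmf_comp)

lemma integrable_info_density_rv:
  assumes "finite (A ` set_pmf K)"
  shows "integrable K (info_density_rv K A B)"
proof -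
  have "finite (set_pmf (map_pmf fst (map_pmf (\<lambda>k. (A k, B k)) K)))"
    using assms by (simp add: map_pmf_comp)
  then show ?thesis
    using integrable_info_density by (fastforce simp: info_density_rv_eq)
qed

lemma mutual_info_rv_eq_expectation:
  assumes "finite (A ` set_pmf K)"
  shows "mutual_info_rv K A B = measure_pmf.expectation K (info_density_rv K A B)"
proof -
  have "finite (set_pmf (map_pmf fst (map_pmf (\<lambda>k. (A k, B k)) K)))"
    using assms by (simp add: map_pmf_comp)
  then show ?thesis
    by (simp add: mutual_info_rv_def mutual_info_pmf_eq_expectation info_density_rv_eq)
qed

section \<open>Gibbs' inequality and data processing\<close>

lemma nn_integral_le_one_of_le_ratio:
  assumes "\<And>k. k \<in> set_pmf K \<Longrightarrow> f k \<le> pmf L (T k) / pmf (map_pmf T K) (T k)"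
  shows "(\<integral>\<^sup>+k. ennreal (f k) \<partial>K) \<le> 1"
proof -
  have "(\<integral>\<^sup>+k. ennreal (f k) \<partial>K) \<le> (\<integral>\<^sup>+k. ennreal (pmf L (T k) / pmf (map_pmf T K) (T k)) \<partial>K)"
    by (intro nn_integral_mono_AE) (auto simp: AE_measure_pmf_iff assms ennreal_leI)
  also have "\<dots> = (\<integral>\<^sup>+m. ennreal (pmf L m / pmf (map_pmf T K) m) \<partial>map_pmf T K)" by simp
  also have "\<dots> = (\<integral>\<^sup>+m. ennreal (pmf (map_pmf T K) m) * ennreal (pmf L m / pmf (map_pmf T K) m)
                      \<partial>count_space UNIV)"
    by (rule nn_integral_measure_pmf)
  also have "\<dots> \<le> (\<integral>\<^sup>+m. ennreal (pmf L m) \<partial>count_space UNIV)"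
  proof (intro nn_integral_mono)
    fix m
    show "ennreal (pmf (map_pmf T K) m) * ennreal (pmf L m / pmf (map_pmf T K) m) \<le> ennreal (pmf L m)"
      by (cases "pmf (map_pmf T K) m = 0") (simp_all add: ennreal_mult[symmetric])
  qed
  also have "\<dots> = 1" by (simp add: nn_integral_pmf_eq_1)
  finally show ?thesis .
qed

text \<open>Gibbs' inequality: \<open>E[log f] \<le> (E f - 1) / ln 2 \<le> 0\<close> whenever \<open>f\<close> is dominated by a
  likelihood ratio of some law \<open>L\<close> against the law of \<open>T\<close>.\<close>
lemma gibbs_expectation_le:
  fixes f g h :: "'k \<Rightarrow> real"
  assumes pos: "\<And>k. k \<in> set_pmf K \<Longrightarrow> 0 < f k"
    and ratio: "\<And>k. k \<in> set_pmf K \<Longrightarrow> f k \<le> pmf L (T k) / pmf (map_pmf T K) (T k)"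
    and intg: "integrable K g" and inth: "integrable K h"
    and pw: "\<And>k. k \<in> set_pmf K \<Longrightarrow> g k \<le> h k + log 2 (f k)"
  shows "measure_pmf.expectation K g \<le> measure_pmf.expectation K h"
proof -
  have le1: "(\<integral>\<^sup>+k. ennreal (f k) \<partial>K) \<le> 1"
    by (rule nn_integral_le_one_of_le_ratio[OF ratio])
  have f_nn: "AE k in K. 0 \<le> f k"
    using pos by (auto simp: AE_measure_pmf_iff less_imp_le)
  have intf: "integrable K f"
    using le1 f_nn by (intro integrableI_nonneg) (auto simp: le_less_trans)
  have Ef: "measure_pmf.expectation K f \<le> 1"
  proof -
    have "measure_pmf.expectation K f = enn2real (\<integral>\<^sup>+k. ennreal (f k) \<partial>K)"
      by (rule integral_eq_nn_integral) (use f_nn in simp_all)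
    also have "\<dots> \<le> enn2real 1" by (rule enn2real_mono[OF le1]) simp
    finally show ?thesis by simp
  qed
  have pw': "g k \<le> h k + (f k - 1) / ln 2" if "k \<in> set_pmf K" for k
  proof -
    have "ln (f k) \<le> f k - 1" using pos[OF that] by (rule ln_le_minus_one)
    hence "log 2 (f k) \<le> (f k - 1) / ln 2" by (simp add: log_def divide_right_mono)
    thus ?thesis using pw[OF that] by simp
  qed
  have "measure_pmf.expectation K g \<le> measure_pmf.expectation K (\<lambda>k. h k + (f k - 1) / ln 2)"
    by (rule integral_mono_AE) (use intg inth intf pw' in \<open>auto simp: AE_measure_pmf_iff\<close>)
  also have "\<dots> = measure_pmf.expectation K h + (measure_pmf.expectation K f - 1) / ln 2"
    using intf inth by (simp add: Bochner_Integration.integral_diff Bochner_Integration.integral_add)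
  also have "\<dots> \<le> measure_pmf.expectation K h" using Ef by (simp add: divide_nonpos_pos)
  finally show ?thesis .
qed

lemma measure_cond_pmf:
  assumes "set_pmf K \<inter> S \<noteq> {}"
  shows "measure_pmf.prob (cond_pmf K S) X = measure_pmf.prob K (S \<inter> X) / measure_pmf.prob K S"
  unfolding cond_pmf.rep_eq[OF assms]
  by (rule measure_uniform_measure) (use assms in \<open>auto simp: emeasure_measure_pmf_not_zero\<close>)

definition cond_indep_coupling ::
  "'k pmf \<Rightarrow> ('k \<Rightarrow> 'u) \<Rightarrow> ('k \<Rightarrow> 'a) \<Rightarrow> ('k \<Rightarrow> 'b) \<Rightarrow> ('a \<times> 'b \<times> 'u) pmf" where
  "cond_indep_coupling K U A B = bind_pmf (map_pmf U K) (\<lambda>u. map_pmf (\<lambda>(a, b). (a, b, u))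
      (pair_pmf (map_pmf A (cond_pmf K {k. U k = u})) (map_pmf B (cond_pmf K {k. U k = u}))))"

lemma pmf_cond_indep_coupling:
  "pmf (cond_indep_coupling K U A B) (a, b, u) =
     rv_pmf K (\<lambda>k. (A k, U k)) (a, u) * rv_pmf K (\<lambda>k. (B k, U k)) (b, u) / rv_pmf K U u"
proof -
  define F where "F u' = map_pmf (\<lambda>(a, b). (a, b, u'))
      (pair_pmf (map_pmf A (cond_pmf K {k. U k = u'})) (map_pmf B (cond_pmf K {k. U k = u'})))" for u'
  have F_other: "pmf (F u') (a, b, u) = 0" if "u' \<noteq> u" for u'
  proof -
    have "(\<lambda>(a', b'). (a', b', u')) -` {(a, b, u)} = {}" using that by auto
    thus ?thesis by (simp add: F_def pmf_map)
  qed
  have "pmf (cond_indep_coupling K U A B) (a, b, u) = (\<integral>u'. pmf (F u') (a, b, u) \<partial>map_pmf U K)"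
    by (simp add: cond_indep_coupling_def pmf_bind F_def)
  also have "\<dots> = (\<Sum>u'\<in>{u}. pmf (map_pmf U K) u' * pmf (F u') (a, b, u))"
    using integral_measure_pmf[of "{u}" "map_pmf U K" "\<lambda>u'. pmf (F u') (a, b, u)"] F_other by auto
  also have "\<dots> = rv_pmf K U u * pmf (F u) (a, b, u)" by (simp add: rv_pmf_def)
  also have "\<dots> = rv_pmf K (\<lambda>k. (A k, U k)) (a, u) * rv_pmf K (\<lambda>k. (B k, U k)) (b, u) / rv_pmf K U u"
  proof (cases "rv_pmf K U u = 0")
    case False
    hence "u \<in> set_pmf (map_pmf U K)" unfolding rv_pmf_def by (simp only: set_pmf_iff) simp
    hence ne: "set_pmf K \<inter> {k. U k = u} \<noteq> {}" by auto
    have inj: "inj (\<lambda>(a', b'). (a', b', u))" by (auto simp: inj_def)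
    have "pmf (F u) (a, b, u) =
        pmf (map_pmf A (cond_pmf K {k. U k = u})) a * pmf (map_pmf B (cond_pmf K {k. U k = u})) b"
      unfolding F_def using pmf_map_inj'[OF inj, of _ "(a, b)"] by (simp add: pmf_pair)
    also have "\<dots> = (rv_pmf K (\<lambda>k. (A k, U k)) (a, u) / rv_pmf K U u) *
                    (rv_pmf K (\<lambda>k. (B k, U k)) (b, u) / rv_pmf K U u)"
      unfolding pmf_map measure_cond_pmf[OF ne] rv_pmf_eq_prob
      by (simp add: Int_def vimage_def conj_commute)
    finally show ?thesis using False by (simp add: field_simps)
  qed simp
  finally show ?thesis .
qed

text \<open>Only this half of the Markov property \<open>A \<rightarrow> B \<rightarrow> C\<close> (on the support, as an inequality)
  is needed by the data-processing inequalities.\<close>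
definition markov_rv :: "'k pmf \<Rightarrow> ('k \<Rightarrow> 'a) \<Rightarrow> ('k \<Rightarrow> 'b) \<Rightarrow> ('k \<Rightarrow> 'c) \<Rightarrow> bool" where
  "markov_rv K A B C \<longleftrightarrow> (\<forall>k\<in>set_pmf K.
      rv_pmf K (\<lambda>k. (A k, B k, C k)) (A k, B k, C k) * rv_pmf K B (B k)
      \<le> rv_pmf K (\<lambda>k. (A k, B k)) (A k, B k) * rv_pmf K (\<lambda>k. (B k, C k)) (B k, C k))"

lemma markov_chain_imp_markov_rv:
  assumes "markov_chain (map_pmf (\<lambda>k. (A k, B k, C k)) K)"
  shows "markov_rv K A B C"
  using assms unfolding markov_rv_def markov_chain_def
  by (simp add: rv_pmf_def map_pmf_comp o_def)

lemma markov_rv_fun_last: "markov_rv K A B (\<lambda>k. g (B k))"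
proof -
  have "rv_pmf K (\<lambda>k. (A k, B k, g (B k))) (A k, B k, g (B k)) = rv_pmf K (\<lambda>k. (A k, B k)) (A k, B k)"
    "rv_pmf K (\<lambda>k. (B k, g (B k))) (B k, g (B k)) = rv_pmf K B (B k)" for k
    by (rule rv_pmf_cong; auto)+
  then show ?thesis by (simp add: markov_rv_def)
qed

lemma markov_rv_fun_first: "markov_rv K (\<lambda>k. g (B k)) B C"
proof -
  have "rv_pmf K (\<lambda>k. (g (B k), B k, C k)) (g (B k), B k, C k) = rv_pmf K (\<lambda>k. (B k, C k)) (B k, C k)"
    "rv_pmf K (\<lambda>k. (g (B k), B k)) (g (B k), B k) = rv_pmf K B (B k)" for k
    by (rule rv_pmf_cong; auto)+
  then show ?thesis by (simp add: markov_rv_def)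
qed

lemma markov_rv_pair_last:
  assumes "markov_rv K A B C"
  shows "markov_rv K A B (\<lambda>k. (B k, C k))"
proof -
  have "rv_pmf K (\<lambda>k. (A k, B k, B k, C k)) (A k, B k, B k, C k) = rv_pmf K (\<lambda>k. (A k, B k, C k)) (A k, B k, C k)"
    "rv_pmf K (\<lambda>k. (B k, B k, C k)) (B k, B k, C k) = rv_pmf K (\<lambda>k. (B k, C k)) (B k, C k)" for k
    by (rule rv_pmf_cong; auto)+
  then show ?thesis using assms by (simp add: markov_rv_def)
qed

lemma ratio_le_of_markov_ineq:
  fixes pB pAC pAB pC pABC pBC :: real
  assumes "0 < pB" "0 < pAC" "0 < pAB" "0 < pC" "0 < pABC" "0 < pBC"
    and "pABC * pB \<le> pAB * pBC"
  shows "pB * pAC / (pAB * pC) \<le> pAC * pBC / pC / pABC"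
proof -
  have "pB * pAC / (pAB * pC) = (pABC * pB) * pAC / (pAB * pC * pABC)"
    using assms by (simp add: field_simps)
  also have "\<dots> \<le> (pAB * pBC) * pAC / (pAB * pC * pABC)"
    using assms by (intro divide_right_mono mult_right_mono) auto
  also have "\<dots> = pAC * pBC / pC / pABC" using assms by (simp add: field_simps)
  finally show ?thesis .
qed

text \<open>Both data-processing inequalities compare the information densities pointwise and pay a
  log-likelihood ratio against the conditionally independent coupling, which Gibbs bounds by 0.\<close>
lemma data_processing_AB:
  assumes fin: "finite (A ` set_pmf K)" and markov: "markov_rv K A B C"
  shows "mutual_info_rv K A C \<le> mutual_info_rv K A B"
proof -
  define f where "f k = rv_pmf K B (B k) * rv_pmf K (\<lambda>k. (A k, C k)) (A k, C k)
      / (rv_pmf K (\<lambda>k. (A k, B k)) (A k, B k) * rv_pmf K C (C k))" for k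
  have p: "0 < rv_pmf K A (A k)" "0 < rv_pmf K B (B k)" "0 < rv_pmf K C (C k)"
    "0 < rv_pmf K (\<lambda>k. (A k, B k)) (A k, B k)" "0 < rv_pmf K (\<lambda>k. (A k, C k)) (A k, C k)"
    "0 < rv_pmf K (\<lambda>k. (B k, C k)) (B k, C k)" "0 < rv_pmf K (\<lambda>k. (A k, B k, C k)) (A k, B k, C k)"
    if "k \<in> set_pmf K" for k
    by (rule rv_pmf_pos[OF that]; simp)+
  have pos: "0 < f k" if "k \<in> set_pmf K" for k
    using p[OF that] by (simp add: f_def)
  have ratio: "f k \<le> pmf (cond_indep_coupling K C A B) (A k, B k, C k)
      / pmf (map_pmf (\<lambda>k. (A k, B k, C k)) K) (A k, B k, C k)" if k: "k \<in> set_pmf K" for k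
  proof -
    have "f k \<le> rv_pmf K (\<lambda>k. (A k, C k)) (A k, C k) * rv_pmf K (\<lambda>k. (B k, C k)) (B k, C k)
        / rv_pmf K C (C k) / rv_pmf K (\<lambda>k. (A k, B k, C k)) (A k, B k, C k)"
      unfolding f_def using markov k by (intro ratio_le_of_markov_ineq p[OF k]) (simp add: markov_rv_def)
    then show ?thesis by (simp add: pmf_cond_indep_coupling rv_pmf_def)
  qed
  have "measure_pmf.expectation K (info_density_rv K A C) \<le> measure_pmf.expectation K (info_density_rv K A B)"
  proof (rule gibbs_expectation_le[OF pos ratio integrable_info_density_rv[OF fin] integrable_info_density_rv[OF fin]])
    fix k assume "k \<in> set_pmf K"
    then show "info_density_rv K A C k \<le> info_density_rv K A B k + log 2 (f k)"
      using p[of k] by (simp add: info_density_rv_def f_def log_divide log_mult)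
  qed
  then show ?thesis using fin by (simp add: mutual_info_rv_eq_expectation)
qed

lemma data_processing_BC:
  assumes finA: "finite (A ` set_pmf K)" and finB: "finite (B ` set_pmf K)"
    and markov: "markov_rv K A B C"
  shows "mutual_info_rv K A C \<le> mutual_info_rv K B C"
proof -
  define f where "f k = rv_pmf K B (B k) * rv_pmf K (\<lambda>k. (A k, C k)) (A k, C k)
      / (rv_pmf K A (A k) * rv_pmf K (\<lambda>k. (B k, C k)) (B k, C k))" for k
  have p: "0 < rv_pmf K A (A k)" "0 < rv_pmf K B (B k)" "0 < rv_pmf K C (C k)"
    "0 < rv_pmf K (\<lambda>k. (A k, B k)) (A k, B k)" "0 < rv_pmf K (\<lambda>k. (A k, C k)) (A k, C k)"
    "0 < rv_pmf K (\<lambda>k. (B k, C k)) (B k, C k)" "0 < rv_pmf K (\<lambda>k. (A k, B k, C k)) (A k, B k, C k)"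
    if "k \<in> set_pmf K" for k
    by (rule rv_pmf_pos[OF that]; simp)+
  have pos: "0 < f k" if "k \<in> set_pmf K" for k
    using p[OF that] by (simp add: f_def)
  have ratio: "f k \<le> pmf (cond_indep_coupling K A B C) (B k, C k, A k)
      / pmf (map_pmf (\<lambda>k. (B k, C k, A k)) K) (B k, C k, A k)" if k: "k \<in> set_pmf K" for k
  proof -
    have "rv_pmf K (\<lambda>k. (B k, A k)) (B k, A k) = rv_pmf K (\<lambda>k. (A k, B k)) (A k, B k)"
      "rv_pmf K (\<lambda>k. (C k, A k)) (C k, A k) = rv_pmf K (\<lambda>k. (A k, C k)) (A k, C k)"
      "rv_pmf K (\<lambda>k. (B k, C k, A k)) (B k, C k, A k) = rv_pmf K (\<lambda>k. (A k, B k, C k)) (A k, B k, C k)"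
      by (rule rv_pmf_cong; auto)+
    moreover have "f k \<le> rv_pmf K (\<lambda>k. (A k, C k)) (A k, C k) * rv_pmf K (\<lambda>k. (A k, B k)) (A k, B k)
        / rv_pmf K A (A k) / rv_pmf K (\<lambda>k. (A k, B k, C k)) (A k, B k, C k)"
      unfolding f_def mult.commute[of "rv_pmf K A (A k)"] using markov k
      by (intro ratio_le_of_markov_ineq p[OF k]) (simp add: markov_rv_def mult.commute)
    ultimately show ?thesis by (simp add: pmf_cond_indep_coupling rv_pmf_def mult.commute)
  qed
  have "measure_pmf.expectation K (info_density_rv K A C) \<le> measure_pmf.expectation K (info_density_rv K B C)"
  proof (rule gibbs_expectation_le[OF pos ratio integrable_info_density_rv[OF finA] integrable_info_density_rv[OF finB]])
    fix k assume "k \<in> set_pmf K"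
    then show "info_density_rv K A C k \<le> info_density_rv K B C k + log 2 (f k)"
      using p[of k] by (simp add: info_density_rv_def f_def log_divide log_mult)
  qed
  then show ?thesis using finA finB by (simp add: mutual_info_rv_eq_expectation)
qed

section \<open>Entropy of an auxiliary variable\<close>

lemma entropy_pmf_map_eq_nn_integral:
  "entropy_pmf (map_pmf W K) = enn2ereal (\<integral>\<^sup>+k. ennreal (- log 2 (rv_pmf K W (W k))) \<partial>K)"
proof -
  define Q where "Q = map_pmf W K"
  have nn: "0 \<le> - log 2 (pmf Q w)" for w
  proof (cases "pmf Q w = 0")
    case False thus ?thesis by (simp add: pmf_le_1 order.not_eq_order_implies_strict)
  qed (simp add: log_def)
  have "(\<integral>\<^sup>+k. ennreal (- log 2 (rv_pmf K W (W k))) \<partial>K) = (\<integral>\<^sup>+w. ennreal (- log 2 (pmf Q w)) \<partial>Q)"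
    by (simp add: Q_def rv_pmf_def)
  also have "\<dots> = (\<integral>\<^sup>+w. ennreal (pmf Q w) * ennreal (- log 2 (pmf Q w)) \<partial>count_space UNIV)"
    by (rule nn_integral_measure_pmf)
  also have "\<dots> = (\<integral>\<^sup>+w. ennreal (- pmf Q w * log 2 (pmf Q w)) \<partial>count_space UNIV)"
    using nn by (intro nn_integral_cong) (simp add: ennreal_mult[symmetric])
  finally show ?thesis by (simp add: entropy_pmf_def Q_def)
qed

lemma
  assumes "entropy_pmf (map_pmf W K) \<le> ereal c"
  shows integrable_self_information: "integrable K (\<lambda>k. - log 2 (rv_pmf K W (W k)))"
    and expectation_self_information_le:
      "measure_pmf.expectation K (\<lambda>k. - log 2 (rv_pmf K W (W k))) \<le> c"
proof -
  define N where "N = (\<integral>\<^sup>+k. ennreal (- log 2 (rv_pmf K W (W k))) \<partial>K)"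
  have N_le: "enn2ereal N \<le> ereal c"
    using assms by (simp add: entropy_pmf_map_eq_nn_integral N_def)
  have nn: "AE k in K. 0 \<le> - log 2 (rv_pmf K W (W k))"
    using rv_pmf_pos[where V = W] by (auto simp: AE_measure_pmf_iff rv_pmf_def pmf_le_1)
  have "N \<noteq> \<top>" using N_le by auto
  then show "integrable K (\<lambda>k. - log 2 (rv_pmf K W (W k)))"
    using nn by (intro integrableI_nonneg) (auto simp: N_def top.not_eq_extremum)
  have "measure_pmf.expectation K (\<lambda>k. - log 2 (rv_pmf K W (W k))) = enn2real N"
    using integral_eq_nn_integral[OF _ nn] by (simp add: N_def)
  also have "\<dots> \<le> c"
    using N_le by (metis PInfty_neq_ereal(1) enn2ereal_nonneg real_of_ereal.simps(1)
        real_of_ereal_enn2ereal real_of_ereal_positive_mono)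
  finally show "measure_pmf.expectation K (\<lambda>k. - log 2 (rv_pmf K W (W k))) \<le> c" .
qed

lemma mutual_info_rv_pair_le:
  assumes fin: "finite (A ` set_pmf K)" and H: "entropy_pmf (map_pmf W K) \<le> ereal c"
  shows "mutual_info_rv K A (\<lambda>k. (B k, W k)) \<le> mutual_info_rv K A B + c"
proof -
  define f where "f k = rv_pmf K B (B k) * rv_pmf K W (W k) / rv_pmf K (\<lambda>k. (B k, W k)) (B k, W k)" for k
  define h where "h k = info_density_rv K A B k + - log 2 (rv_pmf K W (W k))" for k
  have p: "0 < rv_pmf K A (A k)" "0 < rv_pmf K B (B k)" "0 < rv_pmf K W (W k)"
    "0 < rv_pmf K (\<lambda>k. (A k, B k)) (A k, B k)" "0 < rv_pmf K (\<lambda>k. (B k, W k)) (B k, W k)"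
    "0 < rv_pmf K (\<lambda>k. (A k, B k, W k)) (A k, B k, W k)"
    if "k \<in> set_pmf K" for k
    by (rule rv_pmf_pos[OF that]; simp)+
  have pos: "0 < f k" if "k \<in> set_pmf K" for k
    using p[OF that] by (simp add: f_def)
  have ratio: "f k \<le> pmf (pair_pmf (map_pmf B K) (map_pmf W K)) (B k, W k)
      / pmf (map_pmf (\<lambda>k. (B k, W k)) K) (B k, W k)" for k
    by (simp add: f_def pmf_pair rv_pmf_def)
  have int_h: "integrable K h"
    unfolding h_def
    by (intro Bochner_Integration.integrable_add integrable_info_density_rv[OF fin]
        integrable_self_information[OF H])
  have "measure_pmf.expectation K (info_density_rv K A (\<lambda>k. (B k, W k))) \<le> measure_pmf.expectation K h"
  proof (rule gibbs_expectation_le[OF pos ratio integrable_info_density_rv[OF fin] int_h])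
    fix k assume k: "k \<in> set_pmf K"
    have "rv_pmf K (\<lambda>k. (A k, B k, W k)) (A k, B k, W k) \<le> rv_pmf K (\<lambda>k. (A k, B k)) (A k, B k)"
      by (rule rv_pmf_mono) auto
    then show "info_density_rv K A (\<lambda>k. (B k, W k)) k \<le> h k + log 2 (f k)"
      using p[OF k] by (simp add: info_density_rv_def h_def f_def log_divide log_mult)
  qed
  also have "\<dots> = mutual_info_rv K A B + measure_pmf.expectation K (\<lambda>k. - log 2 (rv_pmf K W (W k)))"
    unfolding h_def mutual_info_rv_eq_expectation[OF fin]
    by (intro Bochner_Integration.integral_add integrable_info_density_rv[OF fin]
        integrable_self_information[OF H])
  also have "\<dots> \<le> mutual_info_rv K A B + c"
    using expectation_self_information_le[OF H] by simp
  finally show ?thesis using fin by (simp add: mutual_info_rv_eq_expectation)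
qed

section \<open>Independent pairs\<close>

lemma map_pmf_pair_pmf_fst_snd:
  fixes J1 :: "('x1 \<times> 'y1) pmf" and J2 :: "('x2 \<times> 'y2) pmf"
    and f :: "'x1 \<Rightarrow> 'x2 \<Rightarrow> 'x" and g :: "'y1 \<Rightarrow> 'y2 \<Rightarrow> 'y"
  defines "J \<equiv> map_pmf (\<lambda>((x1, y1), (x2, y2)). (f x1 x2, g y1 y2)) (pair_pmf J1 J2)"
  shows "map_pmf fst J = map_pmf (\<lambda>(a, b). f a b) (pair_pmf (map_pmf fst J1) (map_pmf fst J2))"
    and "map_pmf snd J = map_pmf (\<lambda>(a, b). g a b) (pair_pmf (map_pmf snd J1) (map_pmf snd J2))"
  unfolding J_def map_pair[symmetric] by (simp_all add: map_pmf_comp case_prod_beta)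

lemma inj_on_map_pair_pmf:
  fixes J1 :: "('x1 \<times> 'y1) pmf" and J2 :: "('x2 \<times> 'y2) pmf"
    and f :: "'x1 \<Rightarrow> 'x2 \<Rightarrow> 'x" and g :: "'y1 \<Rightarrow> 'y2 \<Rightarrow> 'y"
  assumes injf: "inj_on (\<lambda>(a, b). f a b) (set_pmf (map_pmf fst J1) \<times> set_pmf (map_pmf fst J2))"
    and injg: "inj (\<lambda>(a, b). g a b)"
  shows "inj_on (\<lambda>((x1, y1), (x2, y2)). (f x1 x2, g y1 y2)) (set_pmf (pair_pmf J1 J2))"
proof (rule inj_onI)
  fix q q'
  assume q: "q \<in> set_pmf (pair_pmf J1 J2)" and q': "q' \<in> set_pmf (pair_pmf J1 J2)"
    and eq: "(\<lambda>((x1, y1), (x2, y2)). (f x1 x2, g y1 y2)) q = (\<lambda>((x1, y1), (x2, y2)). (f x1 x2, g y1 y2)) q'"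
  obtain a1 b1 a2 b2 a1' b1' a2' b2' where
    qd: "q = ((a1, b1), (a2, b2))" and qd': "q' = ((a1', b1'), (a2', b2'))"
    by (metis prod.collapse)
  have supp: "(a1, a2) \<in> set_pmf (map_pmf fst J1) \<times> set_pmf (map_pmf fst J2)"
    "(a1', a2') \<in> set_pmf (map_pmf fst J1) \<times> set_pmf (map_pmf fst J2)"
    using q q' by (force simp: qd qd')+
  have "f a1 a2 = f a1' a2'" "g b1 b2 = g b1' b2'" using eq by (simp_all add: qd qd')
  then have "(a1, a2) = (a1', a2')" "(b1, b2) = (b1', b2')"
    using inj_onD[OF injf _ supp] injD[OF injg] by auto
  then show "q = q'" by (simp add: qd qd')
qed

lemma info_density_map_pair_pmf:
  fixes J1 :: "('x1 \<times> 'y1) pmf" and J2 :: "('x2 \<times> 'y2) pmf"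
    and f :: "'x1 \<Rightarrow> 'x2 \<Rightarrow> 'x" and g :: "'y1 \<Rightarrow> 'y2 \<Rightarrow> 'y"
  defines "J \<equiv> map_pmf (\<lambda>((x1, y1), (x2, y2)). (f x1 x2, g y1 y2)) (pair_pmf J1 J2)"
  assumes injf: "inj_on (\<lambda>(a, b). f a b) (set_pmf (map_pmf fst J1) \<times> set_pmf (map_pmf fst J2))"
    and injg: "inj (\<lambda>(a, b). g a b)"
    and s1: "(x1, y1) \<in> set_pmf J1" and s2: "(x2, y2) \<in> set_pmf J2"
  shows "info_density J (f x1 x2, g y1 y2) = info_density J1 (x1, y1) + info_density J2 (x2, y2)"
proof -
  have q: "((x1, y1), (x2, y2)) \<in> set_pmf (pair_pmf J1 J2)" using s1 s2 by simp
  have x: "x1 \<in> set_pmf (map_pmf fst J1)" "x2 \<in> set_pmf (map_pmf fst J2)" using s1 s2 by force+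
  have "pmf J (f x1 x2, g y1 y2) = pmf J1 (x1, y1) * pmf J2 (x2, y2)"
    using pmf_map_inj[OF inj_on_map_pair_pmf[OF injf injg] q] by (simp add: J_def pmf_pair)
  moreover have "pmf (map_pmf fst J) (f x1 x2) = pmf (map_pmf fst J1) x1 * pmf (map_pmf fst J2) x2"
  proof -
    have "inj_on (\<lambda>(a, b). f a b) (set_pmf (pair_pmf (map_pmf fst J1) (map_pmf fst J2)))"
      using injf by simp
    then show ?thesis
      using x pmf_map_inj[of "\<lambda>(a, b). f a b" _ "(x1, x2)"]
      by (simp add: J_def map_pmf_pair_pmf_fst_snd pmf_pair)
  qed
  moreover have "pmf (map_pmf snd J) (g y1 y2) = pmf (map_pmf snd J1) y1 * pmf (map_pmf snd J2) y2"
    using pmf_map_inj'[OF injg, of _ "(y1, y2)"] by (simp add: J_def map_pmf_pair_pmf_fst_snd pmf_pair)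
  moreover have "0 < pmf J1 (x1, y1)" "0 < pmf J2 (x2, y2)"
    "0 < pmf (map_pmf fst J1) x1" "0 < pmf (map_pmf fst J2) x2"
    "0 < pmf (map_pmf snd J1) y1" "0 < pmf (map_pmf snd J2) y2"
    using s1 s2 by (force intro: pmf_positive)+
  ultimately show ?thesis by (simp add: info_density_def log_divide log_mult)
qed

lemma mutual_info_pmf_return: "mutual_info_pmf (return_pmf z) = 0"
proof -
  have "(\<lambda>(x, y). pmf (return_pmf z) (x, y) *
      log 2 (pmf (return_pmf z) (x, y) / (pmf (map_pmf fst (return_pmf z)) x * pmf (map_pmf snd (return_pmf z)) y)))
      = (\<lambda>_. 0)"
    by (auto simp: fun_eq_iff indicator_def)
  thus ?thesis unfolding mutual_info_pmf_def by simp
qed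

lemma mutual_info_pmf_map_pair_pmf:
  fixes J1 :: "('x1 \<times> 'y1) pmf" and J2 :: "('x2 \<times> 'y2) pmf"
    and f :: "'x1 \<Rightarrow> 'x2 \<Rightarrow> 'x" and g :: "'y1 \<Rightarrow> 'y2 \<Rightarrow> 'y"
  assumes fin1: "finite (set_pmf (map_pmf fst J1))" and fin2: "finite (set_pmf (map_pmf fst J2))"
    and injf: "inj_on (\<lambda>(a, b). f a b) (set_pmf (map_pmf fst J1) \<times> set_pmf (map_pmf fst J2))"
    and injg: "inj (\<lambda>(a, b). g a b)"
  shows "mutual_info_pmf (map_pmf (\<lambda>((x1, y1), (x2, y2)). (f x1 x2, g y1 y2)) (pair_pmf J1 J2))
         = mutual_info_pmf J1 + mutual_info_pmf J2"
proof -
  define Q where "Q = pair_pmf J1 J2"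
  define H where "H = (\<lambda>((x1::'x1, y1::'y1), (x2::'x2, y2::'y2)). (f x1 x2, g y1 y2))"
  define J where "J = map_pmf H Q"
  have finJ: "finite (set_pmf (map_pmf fst J))"
    using fin1 fin2 by (simp add: J_def H_def Q_def map_pmf_pair_pmf_fst_snd)
  have pw: "info_density J (H q) = info_density J1 (fst q) + info_density J2 (snd q)"
    if "q \<in> set_pmf Q" for q
    using that info_density_map_pair_pmf[OF injf injg]
    by (auto simp: J_def H_def Q_def split: prod.splits)
  have i1: "integrable Q (\<lambda>q. info_density J1 (fst q))"
    using integrable_info_density[OF fin1] unfolding Q_def
    by (subst integrable_map_pmf_eq[symmetric, where f=fst]) (simp add: map_fst_pair_pmf)
  have i2: "integrable Q (\<lambda>q. info_density J2 (snd q))"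
    using integrable_info_density[OF fin2] unfolding Q_def
    by (subst integrable_map_pmf_eq[symmetric, where f=snd]) (simp add: map_snd_pair_pmf)
  have "mutual_info_pmf J = measure_pmf.expectation Q (\<lambda>q. info_density J (H q))"
    using mutual_info_pmf_eq_expectation[OF finJ] by (simp add: J_def)
  also have "\<dots> = measure_pmf.expectation Q (\<lambda>q. info_density J1 (fst q) + info_density J2 (snd q))"
    by (rule integral_cong_AE) (auto simp: AE_measure_pmf_iff pw)
  also have "\<dots> = measure_pmf.expectation Q (\<lambda>q. info_density J1 (fst q))
                 + measure_pmf.expectation Q (\<lambda>q. info_density J2 (snd q))"
    by (rule Bochner_Integration.integral_add[OF i1 i2])
  also have "\<dots> = mutual_info_pmf J1 + mutual_info_pmf J2"
    using mutual_info_pmf_eq_expectation[OF fin1] mutual_info_pmf_eq_expectation[OF fin2]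
    by (simp add: Q_def map_fst_pair_pmf map_snd_pair_pmf
        flip: integral_map_pmf[of fst] integral_map_pmf[of snd])
  finally show ?thesis by (simp add: J_def H_def Q_def)
qed

section \<open>Block-independent processes\<close>

lemma process_length: "process P \<Longrightarrow> x \<in> set_pmf (P n) \<Longrightarrow> length x = n"
  by (simp add: process_def)

lemma process_finite_support:
  fixes P :: "nat \<Rightarrow> 'a::finite list pmf"
  assumes "process P"
  shows "finite (set_pmf (P n))"
proof (rule finite_subset)
  show "set_pmf (P n) \<subseteq> {xs. set xs \<subseteq> UNIV \<and> length xs = n}"
    using assms by (auto simp: process_length)
  show "finite {xs :: 'a list. set xs \<subseteq> UNIV \<and> length xs = n}"
    by (rule finite_lists_length_eq) simp
qed

lemma process_0:
  assumes "process P"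
  shows "P 0 = return_pmf []"
proof -
  have "set_pmf (P 0) \<subseteq> {[]}" using process_length[OF assms] by auto
  then show ?thesis by (simp add: set_pmf_subset_singleton)
qed

lemma map_fst_chan_joint [simp]: "map_pmf fst (chan_joint p Z) = p"
  by (simp add: chan_joint_def map_bind_pmf map_pmf_comp o_def bind_return_pmf')

lemma map_fst_pieces_joint [simp]: "map_pmf fst (pieces_joint p Z f) = p"
  by (simp add: pieces_joint_def)

lemma blocks_Suc: "blocks b (Suc t) x = take b x # blocks b t (drop b x)"
proof -
  have "[0..<Suc t] = 0 # map Suc [0..<t]" by (simp add: upt_conv_Cons map_Suc_upt)
  thus ?thesis by (simp add: blocks_def drop_drop add.commute)
qed

lemma block_independent_pmf_Suc:
  assumes bi: "block_independent P b" and pr: "process P" and len: "length x = Suc t * b"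
  shows "pmf (P (Suc t * b)) x = pmf (P b) (take b x) * pmf (P (t * b)) (drop b x)"
proof (cases t)
  case 0
  then show ?thesis using len by (simp add: process_0[OF pr])
next
  case (Suc t')
  have "length (drop b x) = t * b" "1 \<le> t" using len Suc by auto
  then have "pmf (P (t * b)) (drop b x) = prod_list (map (pmf (P b)) (blocks b t (drop b x)))"
    using bi unfolding block_independent_def by blast
  moreover have "pmf (P (Suc t * b)) x = prod_list (map (pmf (P b)) (blocks b (Suc t) x))"
    using bi len unfolding block_independent_def by (metis le_add1 plus_1_eq_Suc)
  ultimately show ?thesis by (simp add: blocks_Suc)
qed

lemma block_independent_Suc:
  assumes pr: "process P" and bi: "block_independent P b"
  shows "P (Suc t * b) = map_pmf (\<lambda>(x1, x2). x1 @ x2) (pair_pmf (P b) (P (t * b)))"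
proof (rule pmf_eqI)
  fix x
  define Q where "Q = pair_pmf (P b) (P (t * b))"
  define app where "app = (\<lambda>(x1::'a list, x2::'a list). x1 @ x2)"
  have "pmf (map_pmf app Q) x = measure_pmf.prob Q (app -` {x} \<inter> set_pmf Q)"
    by (simp add: pmf_map measure_Int_set_pmf)
  also have "\<dots> = pmf (P (Suc t * b)) x"
  proof (cases "length x = Suc t * b")
    case True
    have "app -` {x} \<inter> set_pmf Q = {(take b x, drop b x)} \<inter> set_pmf Q"
      using pr by (auto simp: app_def Q_def process_length)
    hence "measure_pmf.prob Q (app -` {x} \<inter> set_pmf Q) = measure_pmf.prob Q {(take b x, drop b x)}"
      by (simp only: measure_Int_set_pmf)
    also have "\<dots> = pmf (P b) (take b x) * pmf (P (t * b)) (drop b x)"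
      by (simp only: measure_pmf_single Q_def pmf_pair)
    also have "\<dots> = pmf (P (Suc t * b)) x"
      by (rule block_independent_pmf_Suc[OF bi pr True, symmetric])
    finally show ?thesis .
  next
    case False
    then have "app -` {x} \<inter> set_pmf Q = {}" "x \<notin> set_pmf (P (Suc t * b))"
      using pr by (auto simp: app_def Q_def process_length)
    then show ?thesis by (simp add: set_pmf_iff)
  qed
  finally show "pmf (P (Suc t * b)) x = pmf (map_pmf (\<lambda>(x1, x2). x1 @ x2) (pair_pmf (P b) (P (t * b)))) x"
    by (simp add: Q_def app_def)
qed

lemma pieces_joint_blocks_Suc:
  assumes pr: "process P" and bi: "block_independent P b"
  shows "pieces_joint (P (Suc t * b)) Zs (blocks b (Suc t)) =
    map_pmf (\<lambda>((x1, y1), (x2, y2)). (x1 @ x2, y1 # y2))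
      (pair_pmf (chan_joint (P b) Zs) (pieces_joint (P (t * b)) Zs (blocks b t)))"
proof -
  have "pieces_joint (P (Suc t * b)) Zs (blocks b (Suc t)) =
      bind_pmf (P b) (\<lambda>x1. bind_pmf (P (t * b)) (\<lambda>x2.
        map_pmf (Pair (x1 @ x2)) (indep_apply Zs (blocks b (Suc t) (x1 @ x2)))))"
    unfolding pieces_joint_def chan_joint_def block_independent_Suc[OF pr bi, of t]
    by (simp add: pair_pmf_def bind_map_pmf bind_assoc_pmf bind_return_pmf)
  also have "\<dots> = bind_pmf (P b) (\<lambda>x1. bind_pmf (P (t * b)) (\<lambda>x2. bind_pmf (Zs x1) (\<lambda>z.
        map_pmf (\<lambda>zs. (x1 @ x2, z # zs)) (indep_apply Zs (blocks b t x2)))))"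
  proof (intro bind_pmf_cong refl)
    fix x1 x2 assume "x1 \<in> set_pmf (P b)"
    then have "blocks b (Suc t) (x1 @ x2) = x1 # blocks b t x2"
      using pr by (simp add: blocks_Suc process_length)
    then show "map_pmf (Pair (x1 @ x2)) (indep_apply Zs (blocks b (Suc t) (x1 @ x2))) =
      bind_pmf (Zs x1) (\<lambda>z. map_pmf (\<lambda>zs. (x1 @ x2, z # zs)) (indep_apply Zs (blocks b t x2)))"
      by (simp add: map_bind_pmf map_pmf_comp o_def)
  qed
  also have "\<dots> = bind_pmf (P b) (\<lambda>x1. bind_pmf (Zs x1) (\<lambda>z. bind_pmf (P (t * b)) (\<lambda>x2.
        map_pmf (\<lambda>zs. (x1 @ x2, z # zs)) (indep_apply Zs (blocks b t x2)))))"
    by (subst bind_commute_pmf) (rule refl)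
  also have "\<dots> = map_pmf (\<lambda>((x1, y1), (x2, y2)). (x1 @ x2, y1 # y2))
      (pair_pmf (chan_joint (P b) Zs) (pieces_joint (P (t * b)) Zs (blocks b t)))"
    unfolding pieces_joint_def chan_joint_def
    by (simp add: pair_pmf_def map_bind_pmf bind_map_pmf bind_assoc_pmf bind_return_pmf map_pmf_def)
  finally show ?thesis .
qed

lemma mutual_info_pieces_blocks:
  fixes P :: "nat \<Rightarrow> 'a::finite list pmf"
  assumes pr: "process P" and bi: "block_independent P b"
  shows "mutual_info_pmf (pieces_joint (P (t * b)) Zs (blocks b t)) = real t * chan_MI (P b) Zs"
proof (induction t)
  case 0
  have "pieces_joint (P (0 * b)) Zs (blocks b 0) = return_pmf ([], [])"
    by (simp add: process_0[OF pr] pieces_joint_def chan_joint_def blocks_def bind_return_pmf)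
  thus ?case by (simp add: mutual_info_pmf_return)
next
  case (Suc t)
  have inj_append: "inj_on (\<lambda>(x1, x2). x1 @ x2) (set_pmf (P b) \<times> set_pmf (P (t * b)))"
    using pr by (auto simp: inj_on_def process_length)
  have inj_Cons: "inj (\<lambda>(y1, y2). y1 # y2)" by (auto simp: inj_def)
  have "mutual_info_pmf (pieces_joint (P (Suc t * b)) Zs (blocks b (Suc t))) =
      mutual_info_pmf (chan_joint (P b) Zs) + mutual_info_pmf (pieces_joint (P (t * b)) Zs (blocks b t))"
    unfolding pieces_joint_blocks_Suc[OF pr bi]
    by (rule mutual_info_pmf_map_pair_pmf) (use inj_append inj_Cons pr in \<open>simp_all add: process_finite_support\<close>)
  thus ?case using Suc.IH by (simp add: chan_MI_def algebra_simps)
qed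

section \<open>Outputs on pieces\<close>

lemma mutual_info_pieces_le_of_aux_recovers:
  fixes p :: "'x pmf" and Zs :: "'x \<Rightarrow> 'o pmf"
  assumes aux: "aux_recovers p Zs f c" and fin: "finite (set_pmf p)"
  shows "mutual_info_pmf (pieces_joint p Zs f) \<le> chan_MI p Zs + c"
proof -
  obtain K :: "('x \<times> 'o \<times> 'o list \<times> nat) pmf" where
    K_out: "map_pmf (\<lambda>(x, z, zs, w). (x, z)) K = chan_joint p Zs"
    and K_pieces: "map_pmf (\<lambda>(x, z, zs, w). (x, zs)) K = pieces_joint p Zs f"
    and K_markov: "markov_chain (map_pmf (\<lambda>(x, z, zs, w). (x, (z, w), zs)) K)"
    and K_entropy: "entropy_pmf (map_pmf (\<lambda>(x, z, zs, w). w) K) \<le> ereal c"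
    using aux unfolding aux_recovers_def by blast
  define X where "X = (\<lambda>k::'x \<times> 'o \<times> 'o list \<times> nat. fst k)"
  define Z where "Z = (\<lambda>k::'x \<times> 'o \<times> 'o list \<times> nat. fst (snd k))"
  define ZS where "ZS = (\<lambda>k::'x \<times> 'o \<times> 'o list \<times> nat. fst (snd (snd k)))"
  define W where "W = (\<lambda>k::'x \<times> 'o \<times> 'o list \<times> nat. snd (snd (snd k)))"
  have out: "map_pmf (\<lambda>k. (X k, Z k)) K = chan_joint p Zs"
    and pieces: "map_pmf (\<lambda>k. (X k, ZS k)) K = pieces_joint p Zs f"
    and markov: "markov_chain (map_pmf (\<lambda>k. (X k, (Z k, W k), ZS k)) K)"
    and entropy: "entropy_pmf (map_pmf W K) \<le> ereal c"
    using K_out K_pieces K_markov K_entropy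
    by (simp_all add: X_def Z_def ZS_def W_def split_beta')
  have "map_pmf X K = map_pmf fst (map_pmf (\<lambda>k. (X k, Z k)) K)" by (simp add: map_pmf_comp)
  then have "finite (X ` set_pmf K)" using fin out by (metis map_fst_chan_joint set_map_pmf)
  then have "mutual_info_rv K X ZS \<le> mutual_info_rv K X (\<lambda>k. (Z k, W k))"
    using markov by (intro data_processing_AB markov_chain_imp_markov_rv)
  also have "\<dots> \<le> mutual_info_rv K X Z + c"
    using \<open>finite (X ` set_pmf K)\<close> entropy by (rule mutual_info_rv_pair_le)
  finally show ?thesis using out pieces by (simp add: mutual_info_rv_def chan_MI_def)
qed

lemma mutual_info_le_of_markov_fun:
  fixes K :: "('x \<times> 'z \<times> nat) pmf"
  assumes pieces: "map_pmf (\<lambda>(x, zs, y). (x, zs)) K = PJ" and markov: "markov_chain K"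
    and out: "map_pmf (\<lambda>(x, zs, y). (x, \<phi> zs y)) K = CJ"
    and fin: "finite (set_pmf (map_pmf fst PJ))"
  shows "mutual_info_pmf CJ \<le> mutual_info_pmf PJ"
proof -
  define X where "X = (\<lambda>k::'x \<times> 'z \<times> nat. fst k)"
  define ZS where "ZS = (\<lambda>k::'x \<times> 'z \<times> nat. fst (snd k))"
  define Y where "Y = (\<lambda>k::'x \<times> 'z \<times> nat. snd (snd k))"
  have pieces': "map_pmf (\<lambda>k. (X k, ZS k)) K = PJ"
    and out': "map_pmf (\<lambda>k. (X k, \<phi> (ZS k) (Y k))) K = CJ"
    using pieces out by (simp_all add: X_def ZS_def Y_def split_beta')
  have "map_pmf X K = map_pmf fst PJ" unfolding pieces'[symmetric] by (simp add: map_pmf_comp)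
  then have finX: "finite (X ` set_pmf K)" using fin by (metis set_map_pmf)
  have "markov_rv K X ZS (\<lambda>k. (ZS k, Y k))"
    using markov by (intro markov_rv_pair_last markov_chain_imp_markov_rv) (simp add: X_def ZS_def Y_def)
  have "mutual_info_rv K X (\<lambda>k. \<phi> (ZS k) (Y k)) \<le> mutual_info_rv K X (\<lambda>k. (ZS k, Y k))"
    using finX markov_rv_fun_last[of K X "\<lambda>k. (ZS k, Y k)" "\<lambda>(a, b). \<phi> a b"]
    by (intro data_processing_AB) simp_all
  also have "\<dots> \<le> mutual_info_rv K X ZS"
    using finX \<open>markov_rv K X ZS (\<lambda>k. (ZS k, Y k))\<close> by (rule data_processing_AB)
  finally show ?thesis using pieces' out' by (simp add: mutual_info_rv_def)
qed

lemma map_hd_indep_apply_Cons: "map_pmf hd (indep_apply Z (x # xs)) = Z x"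
  by (simp add: map_bind_pmf map_pmf_comp o_def bind_return_pmf')

lemma chan_MI_le_pieces_joint_Cons:
  assumes fin: "finite (set_pmf p)"
  shows "chan_MI (map_pmf g p) Z \<le> mutual_info_pmf (pieces_joint p Z (\<lambda>x. g x # h x))"
proof -
  define J where "J = pieces_joint p Z (\<lambda>x. g x # h x)"
  have finX: "finite (fst ` set_pmf J)"
    using fin by (metis J_def map_fst_pieces_joint set_map_pmf)
  then have finA: "finite ((\<lambda>k. g (fst k)) ` set_pmf J)"
    by (metis finite_imageI image_image)
  have "map_pmf (\<lambda>k. (g (fst k), hd (snd k))) J = chan_joint (map_pmf g p) Z"
    by (simp add: J_def pieces_joint_def chan_joint_def map_bind_pmf bind_map_pmf map_pmf_comp
        map_hd_indep_apply_Cons flip: map_pmf_def)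
  then have "chan_MI (map_pmf g p) Z = mutual_info_rv J (\<lambda>k. g (fst k)) (\<lambda>k. hd (snd k))"
    by (simp add: chan_MI_def mutual_info_rv_def)
  also have "\<dots> \<le> mutual_info_rv J fst (\<lambda>k. hd (snd k))"
    by (rule data_processing_BC[OF finA finX markov_rv_fun_first])
  also have "\<dots> \<le> mutual_info_rv J fst snd"
    by (rule data_processing_AB[OF finX markov_rv_fun_last])
  finally show ?thesis by (simp add: J_def mutual_info_rv_def)
qed

section \<open>Consequences of admissibility\<close>

lemma chan_MI_blocks_le:
  fixes P :: "nat \<Rightarrow> 'a::finite list pmf" and Zs :: "'a list \<Rightarrow> 'p pmf"
  assumes "adm5 Zs" and pr: "process P" and bi: "block_independent P b" and "1 \<le> b" "1 \<le> t"
  shows "chan_MI (P (t * b)) Zs \<le> real t * chan_MI (P b) Zs"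
proof -
  obtain K :: "('a list \<times> 'p list \<times> nat) pmf" and \<phi> :: "'p list \<Rightarrow> nat \<Rightarrow> 'p" where
    pieces: "map_pmf (\<lambda>(x, zs, y). (x, zs)) K = pieces_joint (P (t * b)) Zs (blocks b t)"
    and markov: "markov_chain K"
    and out: "map_pmf (\<lambda>(x, zs, y). (x, \<phi> zs y)) K = chan_joint (P (t * b)) Zs"
    using assms unfolding adm5_def by blast
  have "chan_MI (P (t * b)) Zs \<le> mutual_info_pmf (pieces_joint (P (t * b)) Zs (blocks b t))"
    unfolding chan_MI_def
    by (rule mutual_info_le_of_markov_fun[OF pieces markov out]) (simp add: process_finite_support[OF pr])
  also have "\<dots> = real t * chan_MI (P b) Zs" by (rule mutual_info_pieces_blocks[OF pr bi])
  finally show ?thesis .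
qed

lemma chan_MI_blocks_ge:
  fixes P :: "nat \<Rightarrow> 'a::finite list pmf" and Zs :: "'a list \<Rightarrow> 'p pmf"
  assumes "adm4b Zs \<alpha>" and pr: "process P" and bi: "block_independent P b" and "1 \<le> b" "1 \<le> t"
  shows "real t * chan_MI (P b) Zs \<le> chan_MI (P (t * b)) Zs + real t * \<alpha> b"
proof -
  have "aux_recovers (P (t * b)) Zs (blocks b t) (real t * \<alpha> b)"
    using assms unfolding adm4b_def by blast
  then have "mutual_info_pmf (pieces_joint (P (t * b)) Zs (blocks b t)) \<le> chan_MI (P (t * b)) Zs + real t * \<alpha> b"
    by (rule mutual_info_pieces_le_of_aux_recovers) (rule process_finite_support[OF pr])
  then show ?thesis by (simp add: mutual_info_pieces_blocks[OF pr bi])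
qed

lemma chan_MI_drop_suffix_le:
  fixes P :: "nat \<Rightarrow> 'a::finite list pmf" and Zs :: "'a list \<Rightarrow> 'p pmf"
  assumes "adm4a Zs" and pr: "process P" and "1 \<le> \<tau>"
  shows "\<exists>\<gamma>. (\<lambda>m. \<gamma> m / real m) \<longlonglongrightarrow> 0 \<and>
           (\<forall>n\<ge>\<tau>. chan_MI (P (n - \<tau>)) Zs \<le> chan_MI (P n) Zs + \<gamma> n)"
proof -
  obtain \<gamma> :: "nat \<Rightarrow> real" where lim: "(\<lambda>m. \<gamma> m / real m) \<longlonglongrightarrow> 0"
    and aux: "\<And>n. \<tau> \<le> n \<Longrightarrow> aux_recovers (P n) Zs (\<lambda>x. [take (n - \<tau>) x, drop (n - \<tau>) x]) (\<gamma> n)"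
    using assms unfolding adm4a_def by blast
  have "chan_MI (P (n - \<tau>)) Zs \<le> chan_MI (P n) Zs + \<gamma> n" if "\<tau> \<le> n" for n
  proof -
    have "chan_MI (P (n - \<tau>)) Zs = chan_MI (map_pmf (take (n - \<tau>)) (P n)) Zs"
      using pr by (simp add: process_def)
    also have "\<dots> \<le> mutual_info_pmf (pieces_joint (P n) Zs (\<lambda>x. [take (n - \<tau>) x, drop (n - \<tau>) x]))"
      by (rule chan_MI_le_pieces_joint_Cons) (rule process_finite_support[OF pr])
    also have "\<dots> \<le> chan_MI (P n) Zs + \<gamma> n"
      by (rule mutual_info_pieces_le_of_aux_recovers[OF aux[OF that]]) (rule process_finite_support[OF pr])
    finally show ?thesis .
  qed
  then show ?thesis using lim by blast
qed

text \<open>Rounding the length down to a multiple of \<open>b\<close> drops at most \<open>b - 1\<close> symbols, so one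
  sequence from (4a) for each possible remainder suffices.\<close>
lemma chan_MI_round_down_le:
  fixes P :: "nat \<Rightarrow> 'a::finite list pmf" and Zs :: "'a list \<Rightarrow> 'p pmf"
  assumes "adm4a Zs" and "process P" and "1 \<le> b"
  shows "\<exists>g. (\<lambda>n. g n / real n) \<longlonglongrightarrow> 0 \<and>
           (\<forall>n. chan_MI (P (n div b * b)) Zs \<le> chan_MI (P n) Zs + g n)"
proof -
  have "\<forall>r\<in>{1..<b}. \<exists>\<gamma>. (\<lambda>m. \<gamma> m / real m) \<longlonglongrightarrow> 0 \<and>
           (\<forall>n\<ge>r. chan_MI (P (n - r)) Zs \<le> chan_MI (P n) Zs + \<gamma> n)"
    using chan_MI_drop_suffix_le[OF assms(1,2)] by simp
  then obtain G where G_lim: "\<And>r. r \<in> {1..<b} \<Longrightarrow> (\<lambda>m. G r m / real m) \<longlonglongrightarrow> 0"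
    and G_le: "\<And>r n. r \<in> {1..<b} \<Longrightarrow> r \<le> n \<Longrightarrow> chan_MI (P (n - r)) Zs \<le> chan_MI (P n) Zs + G r n"
    by (metis bchoice)
  define g where "g n = (\<Sum>r\<in>{1..<b}. \<bar>G r n\<bar>)" for n
  have "(\<lambda>n. \<Sum>r\<in>{1..<b}. \<bar>G r n / real n\<bar>) \<longlonglongrightarrow> 0"
    using G_lim by (intro tendsto_null_sum tendsto_rabs_zero)
  then have lim: "(\<lambda>n. g n / real n) \<longlonglongrightarrow> 0"
    by (simp add: g_def sum_divide_distrib)
  have "chan_MI (P (n div b * b)) Zs \<le> chan_MI (P n) Zs + g n" for n
  proof (cases "n mod b = 0")
    case True
    then have "n div b * b = n" using div_mult_mod_eq[of n b] by simp
    then show ?thesis by (simp add: g_def sum_nonneg)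
  next
    case False
    then have r: "n mod b \<in> {1..<b}" using \<open>1 \<le> b\<close> by simp
    have "chan_MI (P (n div b * b)) Zs \<le> chan_MI (P n) Zs + G (n mod b) n"
      using G_le[OF r mod_less_eq_dividend] by (simp add: minus_mod_eq_div_mult)
    also have "G (n mod b) n \<le> g n"
      unfolding g_def by (rule order_trans[OF abs_ge_self member_le_sum[OF r]]) simp_all
    finally show ?thesis by simp
  qed
  then show ?thesis using lim by blast
qed

section \<open>Per-symbol information\<close>

lemma div_over_self_tendsto:
  assumes "0 < b"
  shows "(\<lambda>n. real (n div b) / real n) \<longlonglongrightarrow> 1 / real b"
proof (rule tendsto_sandwich[where f="\<lambda>n. 1 / real b - 1 / real n" and h="\<lambda>_. 1 / real b"])
  have le: "real (n div b) * real b \<le> real n" and ge: "real n < real (n div b) * real b + real b" for n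
  proof -
    have "n div b * b \<le> n" "n < n div b * b + b"
      using assms div_mult_mod_eq[of n b] mod_less_divisor[OF assms, of n] by linarith+
    then show "real (n div b) * real b \<le> real n" "real n < real (n div b) * real b + real b"
      by (simp_all flip: of_nat_mult of_nat_add)
  qed
  show "eventually (\<lambda>n. 1 / real b - 1 / real n \<le> real (n div b) / real n) sequentially"
    using eventually_gt_at_top[of 0]
  proof eventually_elim
    case (elim n)
    have "real n / real b - 1 \<le> real (n div b)"
      using ge[of n] assms by (simp add: field_simps)
    then have "(real n / real b - 1) / real n \<le> real (n div b) / real n"
      by (rule divide_right_mono) simp
    then show ?case using elim by (simp add: diff_divide_distrib)
  qed
  show "eventually (\<lambda>n. real (n div b) / real n \<le> 1 / real b) sequentially"
    using eventually_gt_at_top[of 0]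
  proof eventually_elim
    case (elim n)
    then show ?case using le[of n] assms by (simp add: field_simps)
  qed
  show "(\<lambda>n. 1 / real b - 1 / real n) \<longlonglongrightarrow> 1 / real b"
    using tendsto_diff[OF tendsto_const lim_const_over_n[of 1]] by simp
qed simp

lemma liminf_average_ge_of_multiples:
  fixes I g :: "nat \<Rightarrow> real"
  assumes b: "1 \<le> b"
    and lower: "\<And>t. 1 \<le> t \<Longrightarrow> real t * L \<le> I (t * b)"
    and g: "(\<lambda>n. g n / real n) \<longlonglongrightarrow> 0"
    and round_down: "\<And>n. I (n div b * b) \<le> I n + g n"
  shows "ereal (L / real b) \<le> liminf (\<lambda>n. ereal (I n / real n))"
proof -
  have "(\<lambda>n. real (n div b) / real n * L - g n / real n) \<longlonglongrightarrow> 1 / real b * L - 0"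
    using b by (intro tendsto_diff tendsto_mult_right div_over_self_tendsto g) simp
  then have "ereal (L / real b) = liminf (\<lambda>n. ereal (real (n div b) / real n * L - g n / real n))"
    by (intro lim_imp_Liminf[symmetric]) auto
  also have "\<dots> \<le> liminf (\<lambda>n. ereal (I n / real n))"
  proof (intro Liminf_mono eventually_mono[OF eventually_ge_at_top[of b]])
    fix n assume "b \<le> n"
    then have "1 \<le> n div b" "0 < real n" using b div_le_mono[of b n b] by simp_all
    then have "real (n div b) * L - g n \<le> I n"
      using lower round_down[of n] by (smt (verit))
    then have "(real (n div b) * L - g n) / real n \<le> I n / real n"
      by (rule divide_right_mono) simp
    then show "ereal (real (n div b) / real n * L - g n / real n) \<le> ereal (I n / real n)"
      by (simp add: diff_divide_distrib)
  qed
  finally show ?thesis .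
qed

lemma liminf_average_le_of_multiples:
  fixes I :: "nat \<Rightarrow> real"
  assumes b: "1 \<le> b" and upper: "\<And>t. 1 \<le> t \<Longrightarrow> I (t * b) \<le> real t * U"
  shows "liminf (\<lambda>n. ereal (I n / real n)) \<le> ereal (U / real b)"
proof -
  have "strict_mono (\<lambda>t. Suc t * b)" using b by (auto simp: strict_mono_def)
  then have "liminf (\<lambda>n. ereal (I n / real n))
      \<le> liminf ((\<lambda>n. ereal (I n / real n)) \<circ> (\<lambda>t. Suc t * b))"
    by (rule liminf_subseq_mono)
  also have "\<dots> \<le> liminf (\<lambda>t. ereal (U / real b))"
  proof (intro Liminf_mono always_eventually allI)
    fix t
    have "I (Suc t * b) / real (Suc t * b) \<le> real (Suc t) * U / real (Suc t * b)"
      using upper[of "Suc t"] by (intro divide_right_mono) simp_all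
    also have "\<dots> = U / real b" by (simp only: of_nat_mult) (simp del: of_nat_Suc)
    finally show "((\<lambda>n. ereal (I n / real n)) \<circ> (\<lambda>t. Suc t * b)) t \<le> ereal (U / real b)"
      by simp
  qed
  finally show ?thesis by (simp add: Liminf_const)
qed

theorem lemma3p8:
  fixes Z :: "'a::finite list \<Rightarrow> 'o pmf" and Zs :: "'a list \<Rightarrow> 'p pmf"
    and \<alpha> :: "nat \<Rightarrow> real" and P :: "nat \<Rightarrow> 'a list pmf" and b :: nat
  assumes "admissible Z Zs"
    and "adm4b Zs \<alpha>"
    and "process P"
    and "block_independent P b"
    and "b \<ge> 1"
  shows "\<bar>proc_MI P Zs - chan_MI (P b) Zs / real b\<bar> \<le> \<alpha> b / real b
         \<and> (\<lambda>m. \<alpha> m / real m) \<longlonglongrightarrow> 0"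
proof -
  let ?I = "\<lambda>n. chan_MI (P n) Zs"
  let ?L = "liminf (\<lambda>n. ereal (?I n / real n))"
  have adm: "adm4a Zs" "adm5 Zs" using assms(1) by (simp_all add: admissible_def)
  obtain g where g: "(\<lambda>n. g n / real n) \<longlonglongrightarrow> 0" "\<And>n. ?I (n div b * b) \<le> ?I n + g n"
    using chan_MI_round_down_le[OF adm(1) assms(3,5)] by blast
  have "ereal ((?I b - \<alpha> b) / real b) \<le> ?L"
    using chan_MI_blocks_ge[OF assms(2-5)]
    by (intro liminf_average_ge_of_multiples[OF assms(5) _ g]) (simp add: algebra_simps)
  moreover have "?L \<le> ereal (?I b / real b)"
    using chan_MI_blocks_le[OF adm(2) assms(3-5)] by (intro liminf_average_le_of_multiples[OF assms(5)])
  ultimately obtain l where "?L = ereal l" "(?I b - \<alpha> b) / real b \<le> l" "l \<le> ?I b / real b"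
    by (cases ?L) auto
  then have "\<bar>proc_MI P Zs - ?I b / real b\<bar> \<le> \<alpha> b / real b"
    by (simp add: proc_MI_def abs_le_iff diff_divide_distrib)
  then show ?thesis using assms(2) by (simp add: adm4b_def)
qed

end
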